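(* Let $(\mathcal{T},\mathcal{F},\mathcal{S})$ be a tree of fusion systems satisfying Hypothesis $(H)$ with distinguished vertex $v_*$, and put $S:=\mathcal{S}(v_* )$ (with all $\mathcal{S}(v)$, $\mathcal{S}(e)$ identified with subgroups of $S$ as described in the context). Let $$\mathcal{F}_\mathcal{T}:=\langle \operatorname{Hom}_{\mathcal{F}(v)}(P,\mathcal{S}(v)) \mid P\le \mathcal{S}(v),\ v\in V(\mathcal{T})\rangle_S .$$ Then $\mathcal{F}_\mathcal{T}$ (together with the inclusions $\mathcal{S}(v)\hookrightarrow S$, $\mathcal{S}(e)\hookrightarrow S$) is a colimit of the functor $\mathcal{F}$ in the category of fusion systems. Moreover, every $\alpha\in\operatorname{Hom}_{\mathcal{F}_\mathcal{T}}(P,S)$ can be written as a composite $$P=P_0\xrightarrow{\alpha_0}P_1\xrightarrow{\alpha_1}\cdots\xrightarrow{\alpha_{n-1}}P_n=P\alpha,$$ where there are vertices $v_0,\dots,v_{n-1}$ of $\mathcal{T}$ with $v_i$ and $v_{i+1}$ adjacent in $\mathcal{T}$ for $0\le i\le n-2$, $P_i,P_{i+1}\le \mathcal{S}(v_i)$ and $\alpha_i\in\operatorname{Hom}_{\mathcal{F}(v_i)}(P_i,P_{i+1})$ for each $i$.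
   Context: Conventions: homomorphisms act on the right ($x\varphi$), and $\alpha\circ\beta$ means "first $\alpha$, then $\beta$". $\iota_P^Q$ denotes inclusion $P\hookrightarrow Q$. A fusion system $\mathcal{F}$ on a finite $p$-group $S$ is a category whose objects are the subgroups of $S$, with $\operatorname{Hom}_S(P,Q)\subseteq\operatorname{Hom}_\mathcal{F}(P,Q)\subseteq\operatorname{Inj}(P,Q)$ (conjugation maps by elements of $S$, resp. all injective homomorphisms), such that each morphism factors as an $\mathcal{F}$-isomorphism onto its image followed by an inclusion. For a set $\mathcal{C}$ of injective maps between subgroups of $S$, $\langle\mathcal{C}\rangle_S$ is the smallest fusion system on $S$ containing $\mathcal{C}$. A morphism from a fusion system $\mathcal{F}$ on $S$ to a fusion system $\mathcal{E}$ on $T$ is a homomorphism $\varphi:S\to T$ such that for all $P,R\le S$ and $\alpha\in\operatorname{Hom}_\mathcal{F}(P,R)$ there is $\beta\in\operatorname{Hom}_\mathcal{E}(P\varphi,R\varphi)$ with $\alpha\circ\varphi|_R=\varphi|_P\circ\beta$; it is injective if the induced maps $\operatorname{Hom}_\mathcal{F}(P,S)\to\operatorname{Hom}_\mathcal{E}(P\varphi,T)$ are injective. This gives the category of fusion systems. A finite tree $\mathcal{T}$ is regarded as a category whose objects are its vertices and edges, with a unique morphism $f_{ev}:e\to v$ whenever vertex $v$ is incident on edge $e$. A tree of fusion systems $(\mathcal{T},\mathcal{F},\mathcal{S})$ consists of a finite tree $\mathcal{T}$, a functor $\mathcal{S}$ from $\mathcal{T}$ to groups assigning finite $p$-groups $\mathcal{S}(v),\mathcal{S}(e)$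 and sending each $f_{ev}$ to a monomorphism $\mathcal{S}(e)\to\mathcal{S}(v)$, and a functor $\mathcal{F}$ assigning a fusion system $\mathcal{F}(v)$ on $\mathcal{S}(v)$ and $\mathcal{F}(e)$ on $\mathcal{S}(e)$, such that $\mathcal{S}(f_{ev})$ is an injective morphism of fusion systems $\mathcal{F}(e)\to\mathcal{F}(v)$. Hypothesis $(H)$: there is a vertex $v_*$ such that for every vertex $v\ne v_*$, if $e$ is the edge incident on $v$ lying on the unique minimal path from $v$ to $v_*$, then $\mathcal{S}(f_{ev}):\mathcal{S}(e)\to\mathcal{S}(v)$ is an isomorphism. Under $(H)$, using these isomorphisms and the maps $\mathcal{S}(f_{ev})$, every $\mathcal{S}(v)$ and $\mathcal{S}(e)$ is identified with a subgroup of $S=\mathcal{S}(v_* )$ (which is the colimit of $\mathcal{S}$) so that all $\mathcal{S}(f_{ev})$ become inclusions, and each $\mathcal{F}(e)$ becomes a subsystem of $\mathcal{F}(v)$ for $v$ incident on $e$. *)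

theory Defs
  imports "HOL-Algebra.Algebra"
begin

text \<open>Maps act on the right in the paper;
  here a map phi is an HOL function, and "first phi then psi" is psi o phi.
  Morphisms between subgroups are extensional functions (undefined outside the domain).\<close>

definition is_p_group :: "nat \<Rightarrow> 'a set \<Rightarrow> bool" where
  "is_p_group p S \<longleftrightarrow> Factorial_Ring.prime p \<and> finite S \<and> (\<exists>n. card S = p ^ n)"

definition conj_homs :: "('a, 'm) monoid_scheme \<Rightarrow> 'a set \<Rightarrow> 'a set \<Rightarrow> 'a set \<Rightarrow> ('a \<Rightarrow> 'a) set" where
  "conj_homs G S P Q =
     {restrict (\<lambda>x. inv\<^bsub>G\<^esub> s \<otimes>\<^bsub>G\<^esub> x \<otimes>\<^bsub>G\<^esub> s) P | s.
        s \<in> S \<and> (\<forall>x\<in>P. inv\<^bsub>G\<^esub> s \<otimes>\<^bsub>G\<^esub> x \<otimes>\<^bsub>G\<^esub> s \<in> Q)}"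

definition inj_homs :: "('a, 'm) monoid_scheme \<Rightarrow> 'a set \<Rightarrow> 'a set \<Rightarrow> ('a \<Rightarrow> 'a) set" where
  "inj_homs G P Q =
     {\<phi>. \<phi> \<in> hom (G\<lparr>carrier := P\<rparr>) (G\<lparr>carrier := Q\<rparr>) \<and> inj_on \<phi> P \<and> \<phi> \<in> extensional P}"

definition is_sub :: "('a, 'm) monoid_scheme \<Rightarrow> 'a set \<Rightarrow> 'a set \<Rightarrow> bool" where
  "is_sub G S P \<longleftrightarrow> subgroup P G \<and> P \<subseteq> S"

text \<open>Category: closed under composition (identities are in Hom_S);
  every morphism is an F-isomorphism onto its image (whose inverse lies in F)
  followed by an inclusion.\<close>
definition fusion_system ::
  "nat \<Rightarrow> ('a, 'm) monoid_scheme \<Rightarrow> 'a set \<Rightarrow> ('a set \<Rightarrow> 'a set \<Rightarrow> ('a \<Rightarrow> 'a) set) \<Rightarrow> bool" where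
  "fusion_system p G S F \<longleftrightarrow>
     group G \<and> subgroup S G \<and> is_p_group p S \<and>
     (\<forall>P Q. \<not> (is_sub G S P \<and> is_sub G S Q) \<longrightarrow> F P Q = {}) \<and>
     (\<forall>P Q. is_sub G S P \<and> is_sub G S Q \<longrightarrow>
        conj_homs G S P Q \<subseteq> F P Q \<and> F P Q \<subseteq> inj_homs G P Q) \<and>
     (\<forall>P Q R \<phi> \<psi>. \<phi> \<in> F P Q \<longrightarrow> \<psi> \<in> F Q R \<longrightarrow> restrict (\<psi> \<circ> \<phi>) P \<in> F P R) \<and>
     (\<forall>P Q \<phi>. \<phi> \<in> F P Q \<longrightarrow>
        \<phi> \<in> F P (\<phi> ` P) \<and> restrict (inv_into P \<phi>) (\<phi> ` P) \<in> F (\<phi> ` P) P)"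

definition generated_fs ::
  "nat \<Rightarrow> ('a, 'm) monoid_scheme \<Rightarrow> 'a set \<Rightarrow> ('a set \<Rightarrow> 'a set \<Rightarrow> ('a \<Rightarrow> 'a) set)
   \<Rightarrow> ('a set \<Rightarrow> 'a set \<Rightarrow> ('a \<Rightarrow> 'a) set)" where
  "generated_fs p G S C = (\<lambda>P Q. \<Inter> {F P Q | F. fusion_system p G S F \<and> (\<forall>P' Q'. C P' Q' \<subseteq> F P' Q')})"

definition fs_morphism ::
  "('a, 'm) monoid_scheme \<Rightarrow> 'a set \<Rightarrow> ('a set \<Rightarrow> 'a set \<Rightarrow> ('a \<Rightarrow> 'a) set) \<Rightarrow>
   ('b, 'n) monoid_scheme \<Rightarrow> 'b set \<Rightarrow> ('b set \<Rightarrow> 'b set \<Rightarrow> ('b \<Rightarrow> 'b) set) \<Rightarrow> ('a \<Rightarrow> 'b) \<Rightarrow> bool" where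
  "fs_morphism G S F H T E \<phi> \<longleftrightarrow>
     \<phi> \<in> hom (G\<lparr>carrier := S\<rparr>) (H\<lparr>carrier := T\<rparr>) \<and>
     (\<forall>P R \<alpha>. is_sub G S P \<and> is_sub G S R \<and> \<alpha> \<in> F P R \<longrightarrow>
        (\<exists>\<beta> \<in> E (\<phi> ` P) (\<phi> ` R). \<forall>x\<in>P. \<phi> (\<alpha> x) = \<beta> (\<phi> x)))"

definition inj_fs_morphism ::
  "('a, 'm) monoid_scheme \<Rightarrow> 'a set \<Rightarrow> ('a set \<Rightarrow> 'a set \<Rightarrow> ('a \<Rightarrow> 'a) set) \<Rightarrow>
   ('b, 'n) monoid_scheme \<Rightarrow> 'b set \<Rightarrow> ('b set \<Rightarrow> 'b set \<Rightarrow> ('b \<Rightarrow> 'b) set) \<Rightarrow> ('a \<Rightarrow> 'b) \<Rightarrow> bool" where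
  "inj_fs_morphism G S F H T E \<phi> \<longleftrightarrow>
     fs_morphism G S F H T E \<phi> \<and>
     (\<forall>P \<alpha>1 \<alpha>2 \<beta>. is_sub G S P \<and> \<alpha>1 \<in> F P S \<and> \<alpha>2 \<in> F P S \<and> \<beta> \<in> E (\<phi> ` P) T \<and>
        (\<forall>x\<in>P. \<phi> (\<alpha>1 x) = \<beta> (\<phi> x)) \<and> (\<forall>x\<in>P. \<phi> (\<alpha>2 x) = \<beta> (\<phi> x)) \<longrightarrow> \<alpha>1 = \<alpha>2)"

definition adj_rel :: "'v set set \<Rightarrow> ('v \<times> 'v) set" where
  "adj_rel Ed = {(u, w). {u, w} \<in> Ed}"

definition is_tree :: "'v set \<Rightarrow> 'v set set \<Rightarrow> bool" where
  "is_tree V Ed \<longleftrightarrow> finite V \<and> V \<noteq> {} \<and> (\<forall>e\<in>Ed. e \<subseteq> V \<and> card e = 2) \<and>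
     (\<forall>u\<in>V. \<forall>w\<in>V. (u, w) \<in> (adj_rel Ed)\<^sup>*) \<and> card Ed + 1 = card V"

definition is_walk :: "'v set set \<Rightarrow> 'v list \<Rightarrow> bool" where
  "is_walk Ed xs \<longleftrightarrow> xs \<noteq> [] \<and> (\<forall>i. Suc i < length xs \<longrightarrow> {xs ! i, xs ! Suc i} \<in> Ed)"

definition min_path :: "'v set set \<Rightarrow> 'v \<Rightarrow> 'v \<Rightarrow> 'v list \<Rightarrow> bool" where
  "min_path Ed u w xs \<longleftrightarrow> is_walk Ed xs \<and> hd xs = u \<and> last xs = w \<and>
     (\<forall>ys. is_walk Ed ys \<and> hd ys = u \<and> last ys = w \<longrightarrow> length xs \<le> length ys)"

text \<open>All S(v), S(e) are subgroups of S = S(v_star) inside an ambient group G, the structure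
  maps S(f_ev) are inclusions, and each inclusion S(e) -> S(v) is an injective morphism of
  fusion systems F(e) -> F(v). Hypothesis (H): for v other than v_star, the edge incident
  on v on the minimal path to v_star has S(e) = S(v).\<close>
definition tree_fs_H ::
  "nat \<Rightarrow> ('a, 'm) monoid_scheme \<Rightarrow> 'v set \<Rightarrow> 'v set set \<Rightarrow> 'v \<Rightarrow>
   ('v \<Rightarrow> 'a set) \<Rightarrow> ('v set \<Rightarrow> 'a set) \<Rightarrow>
   ('v \<Rightarrow> 'a set \<Rightarrow> 'a set \<Rightarrow> ('a \<Rightarrow> 'a) set) \<Rightarrow> ('v set \<Rightarrow> 'a set \<Rightarrow> 'a set \<Rightarrow> ('a \<Rightarrow> 'a) set) \<Rightarrow> bool" where
  "tree_fs_H p G V Ed vs Sv Se Fv Fe \<longleftrightarrow>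
     group G \<and> is_tree V Ed \<and> vs \<in> V \<and>
     (\<forall>v\<in>V. Sv v \<subseteq> Sv vs) \<and>
     (\<forall>v\<in>V. fusion_system p G (Sv v) (Fv v)) \<and>
     (\<forall>e\<in>Ed. fusion_system p G (Se e) (Fe e)) \<and>
     (\<forall>e\<in>Ed. \<forall>v\<in>e. Se e \<subseteq> Sv v \<and> inj_fs_morphism G (Se e) (Fe e) G (Sv v) (Fv v) (\<lambda>x. x)) \<and>
     (\<forall>v\<in>V - {vs}. \<forall>xs. min_path Ed v vs xs \<longrightarrow> Se {xs ! 0, xs ! 1} = Sv v)"

fun chain_comp :: "(nat \<Rightarrow> 'a \<Rightarrow> 'a) \<Rightarrow> nat \<Rightarrow> 'a \<Rightarrow> 'a" where
  "chain_comp as 0 = (\<lambda>x. x)"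
| "chain_comp as (Suc n) = as n \<circ> chain_comp as n"

end

theory Submission
  imports Defs
begin

text \<open>
  Hypothesis (H) turns the tree into a tree rooted at v_* in which every vertex v other than
  the root has a neighbour w closer to the root with S(v) = S(e) \<le> S(w).

  Decomposition: call a morphism of F_T decomposable if it is a composite of morphisms of the
  vertex systems along a closed walk at v_* (consecutive vertices adjacent or equal). A
  generator at v decomposes: go down from v_* to v by inclusions, which are morphisms because
  the groups only grow towards the root, apply the generator, and go back up. Decomposable
  maps are closed under composition (restrict the second chain to the image of the first)
  and inverses and contain the S-conjugations, so they form a fusion system, which therefore
  contains F_T. Composing consecutive maps at
  the same vertex turns the closed walk into a genuine walk.

  Universal property: by induction towards the root, the maps of a compatible cocone all
  agree with \<psi>(v_*) on their domains. The morphisms of F_T that lift along \<psi>(v_*) again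
  form a fusion system containing the generators, so \<psi>(v_*) is a morphism out of F_T; it is
  unique because S = S(v_*).
\<close>

section \<open>Injective homomorphisms between subgroups\<close>

lemma inj_homs_iff:
  "\<phi> \<in> inj_homs G P Q \<longleftrightarrow> \<phi> \<in> extensional P \<and> \<phi> ` P \<subseteq> Q \<and>
     (\<forall>x\<in>P. \<forall>y\<in>P. \<phi> (x \<otimes>\<^bsub>G\<^esub> y) = \<phi> x \<otimes>\<^bsub>G\<^esub> \<phi> y) \<and> inj_on \<phi> P"
  unfolding inj_homs_def hom_def by (auto simp: Pi_def)

lemma inj_homs_comp:
  assumes "\<phi> \<in> inj_homs G P Q" "\<psi> \<in> inj_homs G Q R"
    and "\<And>x y. x \<in> P \<Longrightarrow> y \<in> P \<Longrightarrow> x \<otimes>\<^bsub>G\<^esub> y \<in> P"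
  shows "restrict (\<psi> \<circ> \<phi>) P \<in> inj_homs G P R"
  using assms unfolding inj_homs_iff by (auto simp: inj_on_def image_subset_iff)

lemma inj_homs_onto_image: "\<phi> \<in> inj_homs G P Q \<Longrightarrow> \<phi> \<in> inj_homs G P (\<phi> ` P)"
  unfolding inj_homs_iff by auto

lemma inj_homs_inverse:
  assumes \<phi>: "\<phi> \<in> inj_homs G P Q"
    and P_mult: "\<And>x y. x \<in> P \<Longrightarrow> y \<in> P \<Longrightarrow> x \<otimes>\<^bsub>G\<^esub> y \<in> P"
  shows "restrict (inv_into P \<phi>) (\<phi> ` P) \<in> inj_homs G (\<phi> ` P) P"
proof -
  have inj: "inj_on \<phi> P" and mult: "\<And>x y. x \<in> P \<Longrightarrow> y \<in> P \<Longrightarrow> \<phi> (x \<otimes>\<^bsub>G\<^esub> y) = \<phi> x \<otimes>\<^bsub>G\<^esub> \<phi> y"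
    using \<phi> unfolding inj_homs_iff by auto
  have "inv_into P \<phi> (\<phi> x \<otimes>\<^bsub>G\<^esub> \<phi> y) = x \<otimes>\<^bsub>G\<^esub> y" if "x \<in> P" "y \<in> P" for x y
    using that inj P_mult by (metis inv_into_f_f mult)
  moreover have "\<phi> x \<otimes>\<^bsub>G\<^esub> \<phi> y \<in> \<phi> ` P" if "x \<in> P" "y \<in> P" for x y
    using that P_mult by (metis imageI mult)
  ultimately show ?thesis
    using inj unfolding inj_homs_iff by (auto simp: inj_on_def)
qed

lemma conj_map_inj_homs:
  fixes G (structure)
  assumes "group G" and s: "s \<in> carrier G" and P: "P \<subseteq> carrier G"
    and P_mult: "\<And>x y. x \<in> P \<Longrightarrow> y \<in> P \<Longrightarrow> x \<otimes> y \<in> P"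
    and into: "\<forall>x\<in>P. inv s \<otimes> x \<otimes> s \<in> Q"
  shows "restrict (\<lambda>x. inv s \<otimes> x \<otimes> s) P \<in> inj_homs G P Q"
proof -
  interpret group G by fact
  have mult: "inv s \<otimes> (x \<otimes> y) \<otimes> s = (inv s \<otimes> x \<otimes> s) \<otimes> (inv s \<otimes> y \<otimes> s)"
    if "x \<in> carrier G" "y \<in> carrier G" for x y
  proof -
    have cancel: "s \<otimes> (inv s \<otimes> z) = z" if "z \<in> carrier G" for z
      using that s by (simp flip: m_assoc)
    show ?thesis using that s by (simp add: m_assoc cancel)
  qed
  have inj: "x = y" if "x \<in> carrier G" "y \<in> carrier G" "inv s \<otimes> x \<otimes> s = inv s \<otimes> y \<otimes> s" for x y
    using that s by (metis inv_closed l_cancel m_closed r_cancel)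
  show ?thesis unfolding inj_homs_iff
    using into P_mult P by (auto simp: mult subsetD inj_on_def intro: inj)
qed

lemma subgroup_image_inj_homs:
  assumes "group G" and P: "subgroup P G" and Q: "subgroup Q G" and \<phi>: "\<phi> \<in> inj_homs G P Q"
  shows "subgroup (\<phi> ` P) G"
proof -
  have "\<phi> \<in> hom (G\<lparr>carrier := P\<rparr>) G"
    using \<phi> subgroup.subset[OF Q] unfolding inj_homs_def hom_def by auto
  then have "group_hom (G\<lparr>carrier := P\<rparr>) G \<phi>"
    using subgroup.subgroup_is_group[OF P \<open>group G\<close>] \<open>group G\<close>
    unfolding group_hom_def group_hom_axioms_def by blast
  from group_hom.img_is_subgroup[OF this] show ?thesis by simp
qed

lemma id_hom_subset: "A \<subseteq> B \<Longrightarrow> (\<lambda>x. x) \<in> hom (G\<lparr>carrier := A\<rparr>) (G\<lparr>carrier := B\<rparr>)"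
  unfolding hom_def by auto

section \<open>Fusion systems\<close>

locale fusion_sys =
  fixes p :: nat and G :: "('a, 'm) monoid_scheme" and S :: "'a set"
    and F :: "'a set \<Rightarrow> 'a set \<Rightarrow> ('a \<Rightarrow> 'a) set"
  assumes fusion_system: "fusion_system p G S F"
begin

lemma group: "group G" and subgroup: "subgroup S G" and p_group: "is_p_group p S"
  using fusion_system unfolding fusion_system_def by auto

lemma hom_is_sub: "\<phi> \<in> F P Q \<Longrightarrow> is_sub G S P \<and> is_sub G S Q"
  using fusion_system unfolding fusion_system_def by blast

lemma hom_inj_homs: "\<phi> \<in> F P Q \<Longrightarrow> \<phi> \<in> inj_homs G P Q"
  using fusion_system hom_is_sub unfolding fusion_system_def by blast

lemma conj_homs_subset: "is_sub G S P \<Longrightarrow> is_sub G S Q \<Longrightarrow> conj_homs G S P Q \<subseteq> F P Q"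
  using fusion_system unfolding fusion_system_def by blast

lemma comp_closed: "\<phi> \<in> F P Q \<Longrightarrow> \<psi> \<in> F Q R \<Longrightarrow> restrict (\<psi> \<circ> \<phi>) P \<in> F P R"
  using fusion_system unfolding fusion_system_def by blast

lemma onto_image: "\<phi> \<in> F P Q \<Longrightarrow> \<phi> \<in> F P (\<phi> ` P)"
  using fusion_system unfolding fusion_system_def by blast

lemma inverse_closed: "\<phi> \<in> F P Q \<Longrightarrow> restrict (inv_into P \<phi>) (\<phi> ` P) \<in> F (\<phi> ` P) P"
  using fusion_system unfolding fusion_system_def by blast

lemma hom_extensional: "\<phi> \<in> F P Q \<Longrightarrow> \<phi> \<in> extensional P"
  and hom_image_subset: "\<phi> \<in> F P Q \<Longrightarrow> \<phi> ` P \<subseteq> Q"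
  and hom_inj_on: "\<phi> \<in> F P Q \<Longrightarrow> inj_on \<phi> P"
  using hom_inj_homs unfolding inj_homs_iff by blast+

lemma image_is_sub: "\<phi> \<in> F P Q \<Longrightarrow> is_sub G S (\<phi> ` P)"
  using hom_is_sub[OF onto_image] by blast

lemma inverse_on_image: "\<phi> \<in> F P Q \<Longrightarrow> x \<in> P \<Longrightarrow> restrict (inv_into P \<phi>) (\<phi> ` P) (\<phi> x) = x"
  using hom_inj_on by simp

lemma inclusion:
  assumes P: "is_sub G S P" and Q: "is_sub G S Q" and "P \<subseteq> Q"
  shows "restrict (\<lambda>x. x) P \<in> F P Q"
proof -
  have carrier: "P \<subseteq> carrier G" using P subgroup.subset unfolding is_sub_def by blast
  have conj_one: "inv\<^bsub>G\<^esub> \<one>\<^bsub>G\<^esub> \<otimes>\<^bsub>G\<^esub> x \<otimes>\<^bsub>G\<^esub> \<one>\<^bsub>G\<^esub> = x" if "x \<in> P" for x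
    using that carrier group.is_monoid[OF group] by (simp add: monoid.inv_one subsetD)
  have "restrict (\<lambda>x. x) P = restrict (\<lambda>x. inv\<^bsub>G\<^esub> \<one>\<^bsub>G\<^esub> \<otimes>\<^bsub>G\<^esub> x \<otimes>\<^bsub>G\<^esub> \<one>\<^bsub>G\<^esub>) P"
    using conj_one by (auto simp: fun_eq_iff)
  also have "\<dots> \<in> conj_homs G S P Q"
    unfolding conj_homs_def using subgroup.one_closed[OF subgroup] \<open>P \<subseteq> Q\<close> conj_one
    by (intro CollectI exI[of _ "\<one>\<^bsub>G\<^esub>"]) auto
  finally show ?thesis using conj_homs_subset[OF P Q] by blast
qed

lemma enlarge_codomain:
  assumes \<phi>: "\<phi> \<in> F P Q" and R: "is_sub G S R" and "\<phi> ` P \<subseteq> R"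
  shows "\<phi> \<in> F P R"
proof -
  have "restrict (restrict (\<lambda>x. x) (\<phi> ` P) \<circ> \<phi>) P \<in> F P R"
    using comp_closed[OF onto_image[OF \<phi>] inclusion[OF image_is_sub[OF \<phi>] R]] assms by blast
  moreover have "restrict (restrict (\<lambda>x. x) (\<phi> ` P) \<circ> \<phi>) P = \<phi>"
    using hom_extensional[OF \<phi>] by (auto simp: extensional_def fun_eq_iff)
  ultimately show ?thesis by simp
qed

lemma restrict_domain:
  assumes \<phi>: "\<phi> \<in> F P Q" and R: "is_sub G S R" and "R \<subseteq> P"
  shows "restrict \<phi> R \<in> F R (\<phi> ` R)"
proof -
  have "restrict (\<phi> \<circ> restrict (\<lambda>x. x) R) R \<in> F R Q"
    using comp_closed[OF inclusion[OF R _ \<open>R \<subseteq> P\<close>] \<phi>] hom_is_sub[OF \<phi>] by blast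
  moreover have "restrict (\<phi> \<circ> restrict (\<lambda>x. x) R) R = restrict \<phi> R"
    by (auto simp: fun_eq_iff)
  ultimately show ?thesis using onto_image by fastforce
qed

lemma subsystemI:
  assumes sub: "\<And>P Q. D P Q \<subseteq> F P Q"
    and conj: "\<And>P Q. is_sub G S P \<Longrightarrow> is_sub G S Q \<Longrightarrow> conj_homs G S P Q \<subseteq> D P Q"
    and comp: "\<And>P Q R \<phi> \<psi>. \<phi> \<in> D P Q \<Longrightarrow> \<psi> \<in> D Q R \<Longrightarrow> restrict (\<psi> \<circ> \<phi>) P \<in> D P R"
    and image: "\<And>P Q \<phi>. \<phi> \<in> D P Q \<Longrightarrow> \<phi> \<in> D P (\<phi> ` P)"
    and inverse: "\<And>P Q \<phi>. \<phi> \<in> D P Q \<Longrightarrow> restrict (inv_into P \<phi>) (\<phi> ` P) \<in> D (\<phi> ` P) P"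
  shows "fusion_system p G S D"
  unfolding fusion_system_def
proof (intro conjI allI impI)
  show "D P Q = {}" if "\<not> (is_sub G S P \<and> is_sub G S Q)" for P Q
    using that sub hom_is_sub by blast
  show "D P Q \<subseteq> inj_homs G P Q" for P Q
    using sub hom_inj_homs by blast
qed (use group subgroup p_group conj comp image inverse in blast)+

end

lemma is_sub_mult_closed: "is_sub G S P \<Longrightarrow> x \<in> P \<Longrightarrow> y \<in> P \<Longrightarrow> x \<otimes>\<^bsub>G\<^esub> y \<in> P"
  using subgroup.m_closed[of P G x y] unfolding is_sub_def by blast

lemma conj_homs_subset_inj_homs:
  assumes G: "group G" and S: "subgroup S G" and P: "is_sub G S P"
  shows "conj_homs G S P Q \<subseteq> inj_homs G P Q"
proof
  fix c assume "c \<in> conj_homs G S P Q"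
  then obtain s where c: "c = restrict (\<lambda>x. inv\<^bsub>G\<^esub> s \<otimes>\<^bsub>G\<^esub> x \<otimes>\<^bsub>G\<^esub> s) P"
    and s: "s \<in> S" and into: "\<forall>x\<in>P. inv\<^bsub>G\<^esub> s \<otimes>\<^bsub>G\<^esub> x \<otimes>\<^bsub>G\<^esub> s \<in> Q"
    unfolding conj_homs_def by blast
  have "s \<in> carrier G" using s subgroup.subset[OF S] by blast
  moreover have "P \<subseteq> carrier G" using P subgroup.subset unfolding is_sub_def by blast
  ultimately show "c \<in> inj_homs G P Q"
    unfolding c using conj_map_inj_homs[OF G _ _ is_sub_mult_closed[OF P] into] by blast
qed

lemma is_sub_image_inj_homs:
  assumes "group G" and P: "is_sub G S P" and Q: "is_sub G S Q" and \<phi>: "\<phi> \<in> inj_homs G P Q"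
  shows "is_sub G S (\<phi> ` P)"
proof -
  have "subgroup (\<phi> ` P) G"
    using subgroup_image_inj_homs[OF \<open>group G\<close>] P Q \<phi> unfolding is_sub_def by blast
  moreover have "\<phi> ` P \<subseteq> S" using Q \<phi> unfolding is_sub_def inj_homs_iff by blast
  ultimately show ?thesis unfolding is_sub_def ..
qed

lemma all_inj_homs_fusion_system:
  assumes G: "group G" and S: "subgroup S G" and "is_p_group p S"
  shows "fusion_system p G S (\<lambda>P Q. if is_sub G S P \<and> is_sub G S Q then inj_homs G P Q else {})"
  unfolding fusion_system_def
proof (intro conjI allI impI)
  fix P Q \<phi> assume "\<phi> \<in> (if is_sub G S P \<and> is_sub G S Q then inj_homs G P Q else {})"
  then have P: "is_sub G S P" and "is_sub G S Q" "\<phi> \<in> inj_homs G P Q" by (auto split: if_splits)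
  moreover note inj_homs_inverse[OF this(3) is_sub_mult_closed[OF P]]
  ultimately show "\<phi> \<in> (if is_sub G S P \<and> is_sub G S (\<phi> ` P) then inj_homs G P (\<phi> ` P) else {})"
    and "restrict (inv_into P \<phi>) (\<phi> ` P)
      \<in> (if is_sub G S (\<phi> ` P) \<and> is_sub G S P then inj_homs G (\<phi> ` P) P else {})"
    using is_sub_image_inj_homs[OF G] inj_homs_onto_image by simp_all
next
  fix P Q R \<phi> \<psi>
  assume "\<phi> \<in> (if is_sub G S P \<and> is_sub G S Q then inj_homs G P Q else {})"
    "\<psi> \<in> (if is_sub G S Q \<and> is_sub G S R then inj_homs G Q R else {})"
  then have P: "is_sub G S P" and R: "is_sub G S R" and "\<phi> \<in> inj_homs G P Q" "\<psi> \<in> inj_homs G Q R"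
    by (auto split: if_splits)
  then show "restrict (\<psi> \<circ> \<phi>) P \<in> (if is_sub G S P \<and> is_sub G S R then inj_homs G P R else {})"
    using inj_homs_comp[OF _ _ is_sub_mult_closed[OF P]] by simp
next
  fix P Q assume "is_sub G S P \<and> is_sub G S Q"
  then show "conj_homs G S P Q \<subseteq> (if is_sub G S P \<and> is_sub G S Q then inj_homs G P Q else {})"
    using conj_homs_subset_inj_homs[OF G S] by simp
next
  fix P Q assume "\<not> (is_sub G S P \<and> is_sub G S Q)"
  then show "(if is_sub G S P \<and> is_sub G S Q then inj_homs G P Q else {}) = {}" by argo
next
  fix P Q
  show "(if is_sub G S P \<and> is_sub G S Q then inj_homs G P Q else {}) \<subseteq> inj_homs G P Q" by simp
qed (fact assms)+

lemma generated_fs_least: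
  "fusion_system p G S F \<Longrightarrow> (\<And>P Q. C P Q \<subseteq> F P Q) \<Longrightarrow> generated_fs p G S C P Q \<subseteq> F P Q"
  unfolding generated_fs_def by blast

lemma generated_fs_generators: "C P Q \<subseteq> generated_fs p G S C P Q"
  unfolding generated_fs_def by blast

text \<open>The hypothesis is needed: generated_fs is an intersection, which is junk (the family of
  all maps) when no fusion system on S contains C.\<close>

lemma fusion_system_generated_fs:
  assumes F0: "fusion_system p G S F0" and C: "\<And>P Q. C P Q \<subseteq> F0 P Q"
  shows "fusion_system p G S (generated_fs p G S C)"
proof -
  let ?M = "{F. fusion_system p G S F \<and> (\<forall>P Q. C P Q \<subseteq> F P Q)}"
  have mem: "\<phi> \<in> generated_fs p G S C P Q \<longleftrightarrow> (\<forall>F\<in>?M. \<phi> \<in> F P Q)" for \<phi> P Q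
    unfolding generated_fs_def by blast
  interpret F0: fusion_sys p G S F0 by (rule fusion_sys.intro, fact F0)
  show ?thesis
  proof (rule F0.subsystemI)
    show "generated_fs p G S C P Q \<subseteq> F0 P Q" for P Q
      using generated_fs_least[OF F0] C by blast
  next
    fix P Q assume "is_sub G S P" "is_sub G S Q"
    then show "conj_homs G S P Q \<subseteq> generated_fs p G S C P Q"
      by (auto simp: mem intro: fusion_sys.conj_homs_subset[OF fusion_sys.intro, THEN subsetD])
  next
    fix P Q R \<phi> \<psi>
    assume "\<phi> \<in> generated_fs p G S C P Q" "\<psi> \<in> generated_fs p G S C Q R"
    then show "restrict (\<psi> \<circ> \<phi>) P \<in> generated_fs p G S C P R"
      by (auto simp: mem intro: fusion_sys.comp_closed[OF fusion_sys.intro])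
  next
    fix P Q \<phi> assume "\<phi> \<in> generated_fs p G S C P Q"
    then show "\<phi> \<in> generated_fs p G S C P (\<phi> ` P)"
      and "restrict (inv_into P \<phi>) (\<phi> ` P) \<in> generated_fs p G S C (\<phi> ` P) P"
      by (auto simp: mem intro: fusion_sys.onto_image[OF fusion_sys.intro]
          fusion_sys.inverse_closed[OF fusion_sys.intro])
  qed
qed

definition lifting_homs ::
  "('a \<Rightarrow> 'b) \<Rightarrow> ('b set \<Rightarrow> 'b set \<Rightarrow> ('b \<Rightarrow> 'b) set) \<Rightarrow> ('a set \<Rightarrow> 'a set \<Rightarrow> ('a \<Rightarrow> 'a) set)
   \<Rightarrow> 'a set \<Rightarrow> 'a set \<Rightarrow> ('a \<Rightarrow> 'a) set" where
  "lifting_homs \<psi> E F P Q = {\<alpha> \<in> F P Q. \<exists>\<beta>\<in>E (\<psi> ` P) (\<psi> ` Q). \<forall>x\<in>P. \<psi> (\<alpha> x) = \<beta> (\<psi> x)}"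

lemma (in fusion_sys) fusion_system_lifting_homs:
  assumes E: "fusion_system p' H T E"
    and conj: "\<And>P Q. is_sub G S P \<Longrightarrow> is_sub G S Q \<Longrightarrow> conj_homs G S P Q \<subseteq> lifting_homs \<psi> E F P Q"
  shows "fusion_system p G S (lifting_homs \<psi> E F)"
proof -
  interpret E: fusion_sys p' H T E by (rule fusion_sys.intro, fact E)
  show ?thesis
  proof (rule subsystemI)
    show "lifting_homs \<psi> E F P Q \<subseteq> F P Q" for P Q unfolding lifting_homs_def by blast
    show "conj_homs G S P Q \<subseteq> lifting_homs \<psi> E F P Q" if "is_sub G S P" "is_sub G S Q" for P Q
      using conj that .
  next
    fix P Q R \<phi> \<chi> assume "\<phi> \<in> lifting_homs \<psi> E F P Q" "\<chi> \<in> lifting_homs \<psi> E F Q R"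
    then obtain \<beta>1 \<beta>2 where \<phi>: "\<phi> \<in> F P Q" and \<chi>: "\<chi> \<in> F Q R"
      and \<beta>1: "\<beta>1 \<in> E (\<psi> ` P) (\<psi> ` Q)" "\<forall>x\<in>P. \<psi> (\<phi> x) = \<beta>1 (\<psi> x)"
      and \<beta>2: "\<beta>2 \<in> E (\<psi> ` Q) (\<psi> ` R)" "\<forall>x\<in>Q. \<psi> (\<chi> x) = \<beta>2 (\<psi> x)"
      unfolding lifting_homs_def by blast
    have "\<forall>x\<in>P. \<psi> (restrict (\<chi> \<circ> \<phi>) P x) = restrict (\<beta>2 \<circ> \<beta>1) (\<psi> ` P) (\<psi> x)"
      using hom_image_subset[OF \<phi>] \<beta>1(2) \<beta>2(2) by auto
    then show "restrict (\<chi> \<circ> \<phi>) P \<in> lifting_homs \<psi> E F P R"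
      unfolding lifting_homs_def using comp_closed[OF \<phi> \<chi>] E.comp_closed[OF \<beta>1(1) \<beta>2(1)] by blast
  next
    fix P Q \<phi> assume "\<phi> \<in> lifting_homs \<psi> E F P Q"
    then obtain \<beta> where \<phi>: "\<phi> \<in> F P Q"
      and \<beta>: "\<beta> \<in> E (\<psi> ` P) (\<psi> ` Q)" "\<forall>x\<in>P. \<psi> (\<phi> x) = \<beta> (\<psi> x)"
      unfolding lifting_homs_def by blast
    have \<beta>_image: "\<beta> ` \<psi> ` P = \<psi> ` \<phi> ` P" using \<beta>(2) by (auto simp: image_iff)
    have "\<beta> \<in> E (\<psi> ` P) (\<psi> ` \<phi> ` P)" using E.onto_image[OF \<beta>(1)] unfolding \<beta>_image .
    then show "\<phi> \<in> lifting_homs \<psi> E F P (\<phi> ` P)"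
      unfolding lifting_homs_def using onto_image[OF \<phi>] \<beta>(2) by blast
    define \<gamma> where "\<gamma> = restrict (inv_into (\<psi> ` P) \<beta>) (\<beta> ` \<psi> ` P)"
    have "\<gamma> \<in> E (\<psi> ` \<phi> ` P) (\<psi> ` P)"
      unfolding \<gamma>_def using E.inverse_closed[OF \<beta>(1)] unfolding \<beta>_image .
    moreover have "\<psi> (restrict (inv_into P \<phi>) (\<phi> ` P) (\<phi> x)) = \<gamma> (\<psi> (\<phi> x))" if "x \<in> P" for x
      using that \<beta>(2) inverse_on_image[OF \<phi>] E.inverse_on_image[OF \<beta>(1)] by (simp add: \<gamma>_def)
    ultimately show "restrict (inv_into P \<phi>) (\<phi> ` P) \<in> lifting_homs \<psi> E F (\<phi> ` P) P"
      unfolding lifting_homs_def using inverse_closed[OF \<phi>] by blast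
  qed
qed

text \<open>The morphism \<psi> from F0 only serves to lift the conjugations by elements of S.\<close>

lemma fs_morphism_generated_fs:
  assumes FC: "fusion_system p G S (generated_fs p G S C)"
    and E: "fusion_system p' H T E"
    and \<psi>: "fs_morphism G S F0 H T E \<psi>" and F0: "fusion_system p G S F0"
    and lift: "\<And>P Q \<alpha>. \<alpha> \<in> C P Q \<Longrightarrow> \<exists>\<beta>\<in>E (\<psi> ` P) (\<psi> ` Q). \<forall>x\<in>P. \<psi> (\<alpha> x) = \<beta> (\<psi> x)"
  shows "fs_morphism G S (generated_fs p G S C) H T E \<psi>"
proof -
  interpret FC: fusion_sys p G S "generated_fs p G S C" by (rule fusion_sys.intro, fact FC)
  have "conj_homs G S P Q \<subseteq> lifting_homs \<psi> E (generated_fs p G S C) P Q"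
    if "is_sub G S P" "is_sub G S Q" for P Q
    using FC.conj_homs_subset[OF that] fusion_sys.conj_homs_subset[OF fusion_sys.intro[OF F0] that] \<psi> that
    unfolding lifting_homs_def fs_morphism_def by blast
  with E have "fusion_system p G S (lifting_homs \<psi> E (generated_fs p G S C))"
    by (rule FC.fusion_system_lifting_homs)
  moreover have "C P Q \<subseteq> lifting_homs \<psi> E (generated_fs p G S C) P Q" for P Q
    unfolding lifting_homs_def using generated_fs_generators lift by blast
  ultimately have "generated_fs p G S C P R \<subseteq> lifting_homs \<psi> E (generated_fs p G S C) P R" for P R
    by (rule generated_fs_least)
  then show ?thesis
    using \<psi> unfolding fs_morphism_def lifting_homs_def by blast
qed

section \<open>Walks and chains of morphisms\<close>

lemma is_walk_iff_successively:
  "is_walk Ed xs \<longleftrightarrow> xs \<noteq> [] \<and> successively (\<lambda>u w. {u, w} \<in> Ed) xs"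
  unfolding is_walk_def successively_conv_nth by blast

lemma walk_exists:
  assumes "(u, w) \<in> (adj_rel Ed)\<^sup>*"
  shows "\<exists>xs. is_walk Ed xs \<and> hd xs = u \<and> last xs = w"
  using assms
proof (induction rule: converse_rtrancl_induct)
  case base
  show ?case by (intro exI[of _ "[w]"]) (simp add: is_walk_iff_successively)
next
  case (step y z)
  then obtain xs where xs: "is_walk Ed xs" "hd xs = z" "last xs = w" by blast
  have "{y, z} \<in> Ed" using step(1) unfolding adj_rel_def by simp
  then have "is_walk Ed (y # xs)" using xs unfolding is_walk_iff_successively by (cases xs) auto
  then show ?case using xs by (intro exI[of _ "y # xs"]) (auto simp: is_walk_iff_successively)
qed

lemma min_path_exists:
  assumes "(u, w) \<in> (adj_rel Ed)\<^sup>*"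
  shows "\<exists>xs. min_path Ed u w xs"
proof -
  obtain xs where "is_walk Ed xs \<and> hd xs = u \<and> last xs = w"
    using walk_exists[OF assms] by blast
  from ex_has_least_nat[of "\<lambda>xs. is_walk Ed xs \<and> hd xs = u \<and> last xs = w", OF this, of length]
  show ?thesis unfolding min_path_def by blast
qed

lemma min_path_Cons:
  assumes "min_path Ed v w (v # y # zs)"
  shows "min_path Ed y w (y # zs)"
  unfolding min_path_def
proof (intro conjI allI impI)
  show "is_walk Ed (y # zs)" "last (y # zs) = w"
    using assms unfolding min_path_def is_walk_iff_successively by auto
  fix ys assume ys: "is_walk Ed ys \<and> hd ys = y \<and> last ys = w"
  have "{v, y} \<in> Ed" using assms unfolding min_path_def is_walk_iff_successively by simp
  then have "is_walk Ed (v # ys)" using ys unfolding is_walk_iff_successively by (cases ys) auto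
  moreover have "hd (v # ys) = v" "last (v # ys) = w" using ys unfolding is_walk_def by auto
  ultimately have "length (v # y # zs) \<le> length (v # ys)"
    using assms unfolding min_path_def by blast
  then show "length (y # zs) \<le> length ys" by simp
qed simp

text \<open>Walks that may stay put: concatenating two closed walks at a vertex repeats that vertex.\<close>

definition lazy_closed_walk :: "'v set set \<Rightarrow> 'v \<Rightarrow> 'v list \<Rightarrow> bool" where
  "lazy_closed_walk Ed v us \<longleftrightarrow>
     successively (\<lambda>u w. {u, w} \<in> Ed \<or> u = w) us \<and> (us \<noteq> [] \<longrightarrow> hd us = v \<and> last us = v)"

lemma lazy_closed_walk_rev: "lazy_closed_walk Ed v (rev us) \<longleftrightarrow> lazy_closed_walk Ed v us"
proof -
  have sym: "(\<lambda>u w. {w, u} \<in> Ed \<or> w = u) = (\<lambda>u w. {u, w} \<in> Ed \<or> u = w)"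
    by (auto simp: fun_eq_iff insert_commute)
  show ?thesis
    unfolding lazy_closed_walk_def successively_rev sym by (auto simp: hd_rev last_rev)
qed

lemma lazy_closed_walk_append:
  "lazy_closed_walk Ed v us \<Longrightarrow> lazy_closed_walk Ed v ws \<Longrightarrow> lazy_closed_walk Ed v (us @ ws)"
  unfolding lazy_closed_walk_def by (auto simp: successively_append_iff hd_append last_append)

lemma lazy_closed_walk_there_and_back:
  assumes walk: "successively (\<lambda>u w. {u, w} \<in> Ed) (v # us)" and "last (v # us) = w"
  shows "lazy_closed_walk Ed w (rev (v # us) @ us)"
proof -
  have "successively (\<lambda>u w. {u, w} \<in> Ed) (rev (v # us))"
    using walk unfolding successively_rev by (simp add: insert_commute)
  then have "successively (\<lambda>u w. {u, w} \<in> Ed) (rev (v # us) @ us)"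
    using walk by (cases us) (simp_all add: successively_append_iff)
  then have "successively (\<lambda>u w. {u, w} \<in> Ed \<or> u = w) (rev (v # us) @ us)"
    by (rule successively_mono) simp
  with \<open>last (v # us) = w\<close> show ?thesis
    by (cases us) (auto simp: lazy_closed_walk_def hd_append hd_rev)
qed

text \<open>Lists of (vertex, morphism) pairs encode the composites P_0 \<rightarrow> P_1 \<rightarrow> \<dots> \<rightarrow> P_n of the
  theorem, which are easier to concatenate, invert and restrict in this form;
  morphism_chain_as_sequence converts back to the indexed form.\<close>

fun morphism_chain ::
  "'v set \<Rightarrow> ('v \<Rightarrow> 'a set \<Rightarrow> 'a set \<Rightarrow> ('a \<Rightarrow> 'a) set) \<Rightarrow> 'a set \<Rightarrow> ('v \<times> ('a \<Rightarrow> 'a)) list \<Rightarrow> bool"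
where
  "morphism_chain V F P [] \<longleftrightarrow> True"
| "morphism_chain V F P ((v, a) # L) \<longleftrightarrow> v \<in> V \<and> a \<in> F v P (a ` P) \<and> morphism_chain V F (a ` P) L"

fun chain_map :: "('v \<times> ('a \<Rightarrow> 'a)) list \<Rightarrow> 'a \<Rightarrow> 'a" where
  "chain_map [] = (\<lambda>x. x)"
| "chain_map ((v, a) # L) = chain_map L \<circ> a"

fun chain_inverse :: "'a set \<Rightarrow> ('v \<times> ('a \<Rightarrow> 'a)) list \<Rightarrow> ('v \<times> ('a \<Rightarrow> 'a)) list" where
  "chain_inverse P [] = []"
| "chain_inverse P ((v, a) # L) = chain_inverse (a ` P) L @ [(v, restrict (inv_into P a) (a ` P))]"

fun chain_restrict :: "'a set \<Rightarrow> ('v \<times> ('a \<Rightarrow> 'a)) list \<Rightarrow> ('v \<times> ('a \<Rightarrow> 'a)) list" where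
  "chain_restrict Z [] = []"
| "chain_restrict Z ((v, a) # L) = (v, restrict a Z) # chain_restrict (a ` Z) L"

definition identity_chain :: "'a set \<Rightarrow> 'v list \<Rightarrow> ('v \<times> ('a \<Rightarrow> 'a)) list" where
  "identity_chain Z us = map (\<lambda>u. (u, restrict (\<lambda>x. x) Z)) us"

lemma chain_map_append: "chain_map (L1 @ L2) = chain_map L2 \<circ> chain_map L1"
proof (induction L1)
  case (Cons s L)
  then show ?case by (cases s) (simp add: comp_assoc)
qed simp

lemma morphism_chain_append:
  "morphism_chain V F P (L1 @ L2) \<longleftrightarrow>
     morphism_chain V F P L1 \<and> morphism_chain V F (chain_map L1 ` P) L2"
  by (induction V F P L1 rule: morphism_chain.induct) (auto simp: image_comp)

lemma map_fst_chain_inverse: "map fst (chain_inverse P L) = rev (map fst L)"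
  by (induction P L rule: chain_inverse.induct) auto

lemma map_fst_chain_restrict: "map fst (chain_restrict Z L) = map fst L"
  by (induction Z L rule: chain_restrict.induct) auto

lemma map_fst_identity_chain: "map fst (identity_chain Z us) = us"
  unfolding identity_chain_def by (induction us) auto

lemma chain_map_identity_chain: "x \<in> Z \<Longrightarrow> chain_map (identity_chain Z us) x = x"
  unfolding identity_chain_def by (induction us) auto

lemma image_chain_map_identity_chain: "chain_map (identity_chain Z us) ` Z = Z"
  using chain_map_identity_chain by (metis image_cong image_ident)

lemma chain_comp_eq_chain_map_take:
  "k \<le> length L \<Longrightarrow> chain_comp (\<lambda>i. snd (L ! i)) k = chain_map (take k L)"
proof (induction k)
  case (Suc k)
  obtain v a where L_k: "L ! k = (v, a)" by fastforce
  have "chain_comp (\<lambda>i. snd (L ! i)) (Suc k) = a \<circ> chain_comp (\<lambda>i. snd (L ! i)) k"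
    using L_k by simp
  also have "\<dots> = a \<circ> chain_map (take k L)"
    using Suc by simp
  also have "\<dots> = chain_map (take (Suc k) L)"
    using Suc.prems L_k by (simp add: take_Suc_conv_app_nth chain_map_append comp_def)
  finally show ?case .
qed simp

locale fusion_family =
  fixes p :: nat and G :: "('a, 'm) monoid_scheme" and V :: "'v set"
    and Sv :: "'v \<Rightarrow> 'a set" and Fv :: "'v \<Rightarrow> 'a set \<Rightarrow> 'a set \<Rightarrow> ('a \<Rightarrow> 'a) set"
  assumes fusion_system_vertex: "v \<in> V \<Longrightarrow> fusion_system p G (Sv v) (Fv v)"
begin

lemma fusion_sys_vertex: "v \<in> V \<Longrightarrow> fusion_sys p G (Sv v) (Fv v)"
  using fusion_system_vertex by (rule fusion_sys.intro)

lemma morphism_chain_inverse: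
  "morphism_chain V Fv P L \<Longrightarrow>
     morphism_chain V Fv (chain_map L ` P) (chain_inverse P L) \<and>
     (\<forall>x\<in>P. chain_map (chain_inverse P L) (chain_map L x) = x)"
proof (induction P L rule: chain_inverse.induct)
  case (2 P v a L)
  then have v: "v \<in> V" and a: "a \<in> Fv v P (a ` P)" and L: "morphism_chain V Fv (a ` P) L" by auto
  interpret Fv: fusion_sys p G "Sv v" "Fv v" by (rule fusion_sys_vertex[OF v])
  define b where "b = restrict (inv_into P a) (a ` P)"
  have b_a: "b (a x) = x" if "x \<in> P" for x
    unfolding b_def using Fv.inverse_on_image[OF a that] .
  have "b ` a ` P = P" using b_a by (force simp: image_comp)
  then have "b \<in> Fv v (a ` P) (b ` a ` P)"
    unfolding b_def using Fv.inverse_closed[OF a] by simp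
  moreover note IH = "2.IH"[OF L]
  moreover have "chain_map (chain_inverse (a ` P) L) ` chain_map L ` a ` P = a ` P"
  proof -
    have "chain_map (chain_inverse (a ` P) L) ` chain_map L ` a ` P = (\<lambda>y. y) ` a ` P"
      unfolding image_comp by (rule image_cong) (use IH in auto)
    then show ?thesis by simp
  qed
  ultimately have "morphism_chain V Fv (chain_map L ` a ` P) (chain_inverse P ((v, a) # L))"
    using v \<open>b ` a ` P = P\<close> by (simp add: morphism_chain_append flip: b_def)
  moreover have "chain_map (chain_inverse P ((v, a) # L)) (chain_map ((v, a) # L) x) = x"
    if "x \<in> P" for x
    using IH that b_a by (simp add: chain_map_append flip: b_def)
  ultimately show ?case by (simp add: image_comp)
qed simp

lemma morphism_chain_restrict:
  "morphism_chain V Fv P L \<Longrightarrow> subgroup Z G \<Longrightarrow> Z \<subseteq> P \<Longrightarrow>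
     morphism_chain V Fv Z (chain_restrict Z L) \<and>
     (\<forall>x\<in>Z. chain_map (chain_restrict Z L) x = chain_map L x)"
proof (induction L arbitrary: P Z)
  case (Cons s L)
  obtain v a where s: "s = (v, a)" by fastforce
  with Cons.prems have v: "v \<in> V" and a: "a \<in> Fv v P (a ` P)" and L: "morphism_chain V Fv (a ` P) L"
    by auto
  interpret Fv: fusion_sys p G "Sv v" "Fv v" by (rule fusion_sys_vertex[OF v])
  have "is_sub G (Sv v) Z"
    using Fv.hom_is_sub[OF a] Cons.prems unfolding is_sub_def by blast
  then have a_Z: "restrict a Z \<in> Fv v Z (a ` Z)"
    using Fv.restrict_domain[OF a _ \<open>Z \<subseteq> P\<close>] by simp
  then have "subgroup (a ` Z) G"
    using Fv.image_is_sub unfolding is_sub_def by fastforce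
  with Cons.IH[OF L] \<open>Z \<subseteq> P\<close> have "morphism_chain V Fv (a ` Z) (chain_restrict (a ` Z) L)"
    and "\<forall>y\<in>a ` Z. chain_map (chain_restrict (a ` Z) L) y = chain_map L y"
    by auto
  then show ?case using s v a_Z by simp
qed simp

lemma morphism_chain_identity_chain:
  "(\<And>u. u \<in> set us \<Longrightarrow> u \<in> V \<and> is_sub G (Sv u) Z) \<Longrightarrow> morphism_chain V Fv Z (identity_chain Z us)"
proof (induction us)
  case (Cons u us)
  then have u: "u \<in> V" "is_sub G (Sv u) Z" by auto
  have "restrict (\<lambda>x. x) Z \<in> Fv u Z Z"
    using fusion_sys.inclusion[OF fusion_sys_vertex[OF u(1)] u(2) u(2)] by simp
  moreover have "restrict (\<lambda>x. x) Z ` Z = Z" by auto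
  ultimately show ?case using Cons u unfolding identity_chain_def by simp
qed (simp add: identity_chain_def)

text \<open>Consecutive entries at the same vertex are composed into one; the last two conjuncts
  only serve the induction.\<close>

lemma merge_repeated_vertices:
  "morphism_chain V Fv P L \<Longrightarrow> successively (\<lambda>u w. R u w \<or> u = w) (map fst L) \<Longrightarrow>
    \<exists>L'. morphism_chain V Fv P L' \<and> successively R (map fst L') \<and>
      (\<forall>x\<in>P. chain_map L' x = chain_map L x) \<and>
      (L' = [] \<longleftrightarrow> L = []) \<and> hd (map fst L') = hd (map fst L)"
proof (induction L arbitrary: P)
  case Nil
  then show ?case by (intro exI[of _ "[]"]) simp
next
  case (Cons s L)
  obtain v a where s: "s = (v, a)" by fastforce
  with Cons.prems have v: "v \<in> V" and a: "a \<in> Fv v P (a ` P)" and L: "morphism_chain V Fv (a ` P) L"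
    by auto
  interpret Fv: fusion_sys p G "Sv v" "Fv v" by (rule fusion_sys_vertex[OF v])
  have walk_L: "successively (\<lambda>u w. R u w \<or> u = w) (map fst L)"
    and step: "L \<noteq> [] \<Longrightarrow> R v (fst (hd L)) \<or> v = fst (hd L)"
    using Cons.prems s by (auto simp: successively_Cons hd_map)
  obtain L' where L': "morphism_chain V Fv (a ` P) L'" "successively R (map fst L')"
    "\<forall>x\<in>a ` P. chain_map L' x = chain_map L x" "L' = [] \<longleftrightarrow> L = []"
    "hd (map fst L') = hd (map fst L)"
    using Cons.IH[OF L walk_L] by blast
  show ?case
  proof (cases "L' \<noteq> [] \<and> fst (hd L') = v")
    case True
    then obtain b L'' where L'_eq: "L' = (v, b) # L''" by (cases L') auto
    with L'(1) have b: "b \<in> Fv v (a ` P) (b ` a ` P)" and L'': "morphism_chain V Fv (b ` a ` P) L''"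
      by auto
    define c where "c = restrict (b \<circ> a) P"
    have "c ` P = b ` a ` P" unfolding c_def by auto
    then have "c \<in> Fv v P (c ` P)" unfolding c_def using Fv.comp_closed[OF a b] by simp
    then have "morphism_chain V Fv P ((v, c) # L'')"
      using v L'' \<open>c ` P = b ` a ` P\<close> by simp
    moreover have "successively R (map fst ((v, c) # L''))"
      using L'(2) L'_eq by simp
    moreover have "\<forall>x\<in>P. chain_map ((v, c) # L'') x = chain_map (s # L) x"
      using L'(3) L'_eq s by (simp add: c_def)
    ultimately show ?thesis using s by (intro exI[of _ "(v, c) # L''"]) simp
  next
    case False
    have "successively R (map fst ((v, a) # L'))"
      using L'(2,4,5) step False by (cases L') (auto simp: successively_Cons hd_map)
    then show ?thesis using s v a L' by (intro exI[of _ "(v, a) # L'"]) auto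
  qed
qed

lemma morphism_chain_as_sequence:
  assumes L: "morphism_chain V Fv P L" and walk: "successively R (map fst L)"
  shows "\<exists>n Ps vv as. Ps 0 = P \<and> Ps n = chain_map L ` P
     \<and> (\<forall>i<n. vv i \<in> V \<and> is_sub G (Sv (vv i)) (Ps i) \<and> is_sub G (Sv (vv i)) (Ps (Suc i))
              \<and> as i \<in> Fv (vv i) (Ps i) (Ps (Suc i)))
     \<and> (\<forall>i. Suc i < n \<longrightarrow> R (vv i) (vv (Suc i)))
     \<and> (\<forall>x. chain_comp as n x = chain_map L x)"
proof (intro exI conjI allI impI)
  let ?Ps = "\<lambda>i. chain_map (take i L) ` P" and ?vv = "\<lambda>i. fst (L ! i)" and ?as = "\<lambda>i. snd (L ! i)"
  show "?Ps 0 = P" by simp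
  show "?Ps (length L) = chain_map L ` P" by simp
  show "chain_comp ?as (length L) x = chain_map L x" for x
    using chain_comp_eq_chain_map_take[of "length L" L] by simp
  show "R (?vv i) (?vv (Suc i))" if "Suc i < length L" for i
    using walk that by (simp add: successively_conv_nth)
  fix i assume i: "i < length L"
  obtain v a where L_i: "L ! i = (v, a)" by fastforce
  with i have "L = take i L @ (v, a) # drop (Suc i) L"
    by (metis id_take_nth_drop)
  then have "morphism_chain V Fv (?Ps i) ((v, a) # drop (Suc i) L)"
    using L morphism_chain_append by metis
  then have v: "v \<in> V" and a: "a \<in> Fv v (?Ps i) (a ` ?Ps i)" by auto
  have "?Ps (Suc i) = a ` ?Ps i"
    using i L_i by (simp add: take_Suc_conv_app_nth chain_map_append image_comp)
  with v a L_i show "?vv i \<in> V" "?as i \<in> Fv (?vv i) (?Ps i) (?Ps (Suc i))"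
    "is_sub G (Sv (?vv i)) (?Ps i)" "is_sub G (Sv (?vv i)) (?Ps (Suc i))"
    using fusion_sys.hom_is_sub[OF fusion_sys_vertex[OF v] a] by auto
qed

end

section \<open>Trees of fusion systems\<close>

locale tree_of_fusion_systems =
  fixes p :: nat and G :: "('a, 'm) monoid_scheme"
    and V :: "'v set" and Ed :: "'v set set" and vs :: 'v
    and Sv :: "'v \<Rightarrow> 'a set" and Se :: "'v set \<Rightarrow> 'a set"
    and Fv :: "'v \<Rightarrow> 'a set \<Rightarrow> 'a set \<Rightarrow> ('a \<Rightarrow> 'a) set"
    and Fe :: "'v set \<Rightarrow> 'a set \<Rightarrow> 'a set \<Rightarrow> ('a \<Rightarrow> 'a) set"
  assumes tree_fs_H: "tree_fs_H p G V Ed vs Sv Se Fv Fe"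
begin

lemma root_in_V: "vs \<in> V"
  using tree_fs_H unfolding tree_fs_H_def by simp

lemma vertex_subset_root: "v \<in> V \<Longrightarrow> Sv v \<subseteq> Sv vs"
  using tree_fs_H unfolding tree_fs_H_def by simp

lemma edge_subset_vertex: "e \<in> Ed \<Longrightarrow> v \<in> e \<Longrightarrow> Se e \<subseteq> Sv v"
  using tree_fs_H unfolding tree_fs_H_def by simp

lemma edge_fs_morphism: "e \<in> Ed \<Longrightarrow> v \<in> e \<Longrightarrow> fs_morphism G (Se e) (Fe e) G (Sv v) (Fv v) (\<lambda>x. x)"
  using tree_fs_H unfolding tree_fs_H_def inj_fs_morphism_def by simp

lemma hypothesis_H: "v \<in> V - {vs} \<Longrightarrow> min_path Ed v vs xs \<Longrightarrow> Se {xs ! 0, xs ! 1} = Sv v"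
  using tree_fs_H unfolding tree_fs_H_def by simp

lemma edge_subset_V: "e \<in> Ed \<Longrightarrow> e \<subseteq> V"
  using tree_fs_H unfolding tree_fs_H_def is_tree_def by simp

lemma connected: "u \<in> V \<Longrightarrow> w \<in> V \<Longrightarrow> (u, w) \<in> (adj_rel Ed)\<^sup>*"
  using tree_fs_H unfolding tree_fs_H_def is_tree_def by simp

lemma edge_has_vertex: "e \<in> Ed \<Longrightarrow> \<exists>v\<in>V. v \<in> e"
proof -
  assume e: "e \<in> Ed"
  then have "card e = 2" using tree_fs_H unfolding tree_fs_H_def is_tree_def by simp
  then obtain v where "v \<in> e" by (auto simp: card_2_iff)
  then show ?thesis using edge_subset_V[OF e] by blast
qed

sublocale fusion_family p G V Sv Fv
  using tree_fs_H unfolding tree_fs_H_def by unfold_locales simp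

text \<open>All uses of Hypothesis (H) go through this induction principle.\<close>

lemma root_induct [consumes 1, case_names root step]:
  assumes v: "v \<in> V" and root: "P vs"
    and step: "\<And>v w. v \<in> V \<Longrightarrow> v \<noteq> vs \<Longrightarrow> w \<in> V \<Longrightarrow> {v, w} \<in> Ed \<Longrightarrow> Se {v, w} = Sv v
        \<Longrightarrow> P w \<Longrightarrow> P v"
  shows "P v"
proof -
  obtain xs where "min_path Ed v vs xs"
    using min_path_exists[OF connected[OF v root_in_V]] by blast
  with v show ?thesis
  proof (induction "length xs" arbitrary: v xs rule: less_induct)
    case less
    show ?case
    proof (cases "v = vs")
      case True
      then show ?thesis using root by simp
    next
      case False
      have walk: "is_walk Ed xs" "hd xs = v" "last xs = vs"
        using less.prems unfolding min_path_def by auto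
      then obtain w ys where xs: "xs = v # w # ys"
        using False unfolding is_walk_def by (cases xs rule: remdups_adj.cases) auto
      have e: "{v, w} \<in> Ed" using walk(1) unfolding xs is_walk_iff_successively by simp
      then have w: "w \<in> V" using edge_subset_V by blast
      have "min_path Ed w vs (w # ys)" by (rule min_path_Cons) (use less.prems xs in simp)
      then have "P w" using less.hyps[of "w # ys" w] w xs by simp
      moreover have "Se {v, w} = Sv v" using hypothesis_H[of v xs] less.prems False xs by simp
      ultimately show ?thesis using step less.prems(1) False w e by blast
    qed
  qed
qed

text \<open>Along this walk the groups Sv only grow, so identity maps of subgroups of Sv v are
  morphisms at every vertex of the walk.\<close>

lemma ascending_walk_to_root:
  assumes "v \<in> V"
  shows "\<exists>us. successively (\<lambda>u w. {u, w} \<in> Ed) (v # us) \<and> last (v # us) = vs \<and>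
           (\<forall>u\<in>set us. u \<in> V \<and> Sv v \<subseteq> Sv u)"
  using assms
proof (induction rule: root_induct)
  case root
  then show ?case by (intro exI[of _ "[]"]) simp
next
  case (step v w)
  then obtain us where us: "successively (\<lambda>u w. {u, w} \<in> Ed) (w # us)" "last (w # us) = vs"
    "\<forall>u\<in>set us. u \<in> V \<and> Sv w \<subseteq> Sv u" by blast
  have "Sv v \<subseteq> Sv w" using edge_subset_vertex[OF step(4)] step(5) by blast
  then show ?case using us step(3,4) by (intro exI[of _ "w # us"]) auto
qed

abbreviation generators :: "'a set \<Rightarrow> 'a set \<Rightarrow> ('a \<Rightarrow> 'a) set" where
  "generators \<equiv> \<lambda>P Q. \<Union>v\<in>V. if is_sub G (Sv v) P \<and> Q = Sv v then Fv v P Q else {}"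

abbreviation FT :: "'a set \<Rightarrow> 'a set \<Rightarrow> ('a \<Rightarrow> 'a) set" where
  "FT \<equiv> generated_fs p G (Sv vs) generators"

lemma is_sub_root: "v \<in> V \<Longrightarrow> is_sub G (Sv v) P \<Longrightarrow> is_sub G (Sv vs) P"
  using vertex_subset_root unfolding is_sub_def by blast

lemma is_sub_vertex: "v \<in> V \<Longrightarrow> is_sub G (Sv v) (Sv v)"
  using fusion_sys.subgroup[OF fusion_sys_vertex] unfolding is_sub_def by blast

lemma fusion_system_FT: "fusion_system p G (Sv vs) FT"
proof (rule fusion_system_generated_fs)
  interpret Fvs: fusion_sys p G "Sv vs" "Fv vs" by (rule fusion_sys_vertex[OF root_in_V])
  show "fusion_system p G (Sv vs)
      (\<lambda>P Q. if is_sub G (Sv vs) P \<and> is_sub G (Sv vs) Q then inj_homs G P Q else {})"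
    by (rule all_inj_homs_fusion_system[OF Fvs.group Fvs.subgroup Fvs.p_group])
  fix P Q show "generators P Q \<subseteq>
      (if is_sub G (Sv vs) P \<and> is_sub G (Sv vs) Q then inj_homs G P Q else {})"
    using fusion_sys.hom_inj_homs[OF fusion_sys_vertex] is_sub_root is_sub_vertex
    by (fastforce split: if_splits)
qed

sublocale FT: fusion_sys p G "Sv vs" FT
  by (rule fusion_sys.intro, rule fusion_system_FT)

lemma vertex_hom_in_FT:
  assumes v: "v \<in> V" and \<alpha>: "\<alpha> \<in> Fv v P R"
  shows "\<alpha> \<in> FT P R"
proof -
  interpret Fv: fusion_sys p G "Sv v" "Fv v" by (rule fusion_sys_vertex[OF v])
  have P: "is_sub G (Sv v) P" and R: "is_sub G (Sv v) R" using Fv.hom_is_sub[OF \<alpha>] by auto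
  have "\<alpha> \<in> Fv v P (Sv v)"
    using Fv.enlarge_codomain[OF \<alpha> is_sub_vertex[OF v]] Fv.hom_image_subset[OF \<alpha>] R
    unfolding is_sub_def by blast
  then have "\<alpha> \<in> (if is_sub G (Sv v) P \<and> Sv v = Sv v then Fv v P (Sv v) else {})"
    using P by simp
  then have "\<alpha> \<in> generators P (Sv v)" by (rule UN_I[OF v])
  then have "\<alpha> \<in> FT P (Sv v)" using generated_fs_generators by (rule subsetD[rotated])
  then show ?thesis
    by (rule FT.enlarge_codomain[OF _ is_sub_root[OF v R] Fv.hom_image_subset[OF \<alpha>]])
qed

lemma fs_morphism_vertex_FT: "v \<in> V \<Longrightarrow> fs_morphism G (Sv v) (Fv v) G (Sv vs) FT (\<lambda>x. x)"
  unfolding fs_morphism_def using id_hom_subset vertex_subset_root vertex_hom_in_FT by auto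

lemma fs_morphism_edge_FT:
  assumes e: "e \<in> Ed" shows "fs_morphism G (Se e) (Fe e) G (Sv vs) FT (\<lambda>x. x)"
proof -
  obtain v where v: "v \<in> V" "v \<in> e" using edge_has_vertex[OF e] by blast
  have "Se e \<subseteq> Sv vs" using edge_subset_vertex[OF e v(2)] vertex_subset_root[OF v(1)] by blast
  moreover have "\<exists>\<beta>\<in>FT P R. \<forall>x\<in>P. \<alpha> x = \<beta> x"
    if "is_sub G (Se e) P" "is_sub G (Se e) R" "\<alpha> \<in> Fe e P R" for P R \<alpha>
    using edge_fs_morphism[OF e v(2)] that vertex_hom_in_FT[OF v(1)]
    unfolding fs_morphism_def image_ident by blast
  ultimately show ?thesis unfolding fs_morphism_def using id_hom_subset by auto
qed

definition decomposable_homs :: "'a set \<Rightarrow> 'a set \<Rightarrow> ('a \<Rightarrow> 'a) set" where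
  "decomposable_homs P Q = {\<alpha> \<in> FT P Q. \<exists>L. morphism_chain V Fv P L \<and>
     lazy_closed_walk Ed vs (map fst L) \<and> (\<forall>x\<in>P. \<alpha> x = chain_map L x)}"

lemma conj_homs_decomposable:
  assumes P: "is_sub G (Sv vs) P" and Q: "is_sub G (Sv vs) Q"
  shows "conj_homs G (Sv vs) P Q \<subseteq> decomposable_homs P Q"
proof
  interpret Fvs: fusion_sys p G "Sv vs" "Fv vs" by (rule fusion_sys_vertex[OF root_in_V])
  fix c assume c: "c \<in> conj_homs G (Sv vs) P Q"
  then have "c \<in> Fv vs P (c ` P)" using Fvs.onto_image Fvs.conj_homs_subset[OF P Q] by blast
  then have "morphism_chain V Fv P [(vs, c)]" using root_in_V by simp
  moreover have "lazy_closed_walk Ed vs (map fst [(vs, c)])" by (simp add: lazy_closed_walk_def)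
  ultimately show "c \<in> decomposable_homs P Q"
    unfolding decomposable_homs_def using c FT.conj_homs_subset[OF P Q] by fastforce
qed

lemma decomposable_homs_comp_closed:
  assumes "\<phi> \<in> decomposable_homs P Q" "\<psi> \<in> decomposable_homs Q R"
  shows "restrict (\<psi> \<circ> \<phi>) P \<in> decomposable_homs P R"
proof -
  obtain L1 L2 where \<phi>: "\<phi> \<in> FT P Q" and L1: "morphism_chain V Fv P L1"
      "lazy_closed_walk Ed vs (map fst L1)" "\<forall>x\<in>P. \<phi> x = chain_map L1 x"
    and \<psi>: "\<psi> \<in> FT Q R" and L2: "morphism_chain V Fv Q L2"
      "lazy_closed_walk Ed vs (map fst L2)" "\<forall>x\<in>Q. \<psi> x = chain_map L2 x"
    using assms unfolding decomposable_homs_def by blast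
  have into: "\<phi> ` P \<subseteq> Q" using FT.hom_image_subset[OF \<phi>] .
  have "subgroup (\<phi> ` P) G" using FT.image_is_sub[OF \<phi>] unfolding is_sub_def by blast
  note L2' = morphism_chain_restrict[OF L2(1) this into]
  have image_L1: "chain_map L1 ` P = \<phi> ` P" using L1(3) by (auto simp: image_iff)
  define L where "L = L1 @ chain_restrict (\<phi> ` P) L2"
  have "morphism_chain V Fv P L"
    unfolding L_def morphism_chain_append image_L1 using L1(1) L2' by blast
  moreover have "lazy_closed_walk Ed vs (map fst L)"
    unfolding L_def using lazy_closed_walk_append L1(2) L2(2) by (simp add: map_fst_chain_restrict)
  moreover have "restrict (\<psi> \<circ> \<phi>) P x = chain_map L x" if "x \<in> P" for x
    using that L1(3) L2' L2(3) into by (auto simp: L_def chain_map_append)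
  ultimately show ?thesis
    unfolding decomposable_homs_def using FT.comp_closed[OF \<phi> \<psi>] by blast
qed

lemma decomposable_homs_inverse_closed:
  assumes "\<phi> \<in> decomposable_homs P Q"
  shows "restrict (inv_into P \<phi>) (\<phi> ` P) \<in> decomposable_homs (\<phi> ` P) P"
proof -
  obtain L where \<phi>: "\<phi> \<in> FT P Q" and L: "morphism_chain V Fv P L"
      "lazy_closed_walk Ed vs (map fst L)" "\<forall>x\<in>P. \<phi> x = chain_map L x"
    using assms unfolding decomposable_homs_def by blast
  have image_L: "chain_map L ` P = \<phi> ` P" using L(3) by (auto simp: image_iff)
  note L' = morphism_chain_inverse[OF L(1), unfolded image_L]
  moreover have "lazy_closed_walk Ed vs (map fst (chain_inverse P L))"
    using L(2) by (simp add: map_fst_chain_inverse lazy_closed_walk_rev)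
  moreover have "restrict (inv_into P \<phi>) (\<phi> ` P) y = chain_map (chain_inverse P L) y"
    if "y \<in> \<phi> ` P" for y
    using that L' L(3) FT.inverse_on_image[OF \<phi>] by auto
  ultimately show ?thesis
    unfolding decomposable_homs_def using FT.inverse_closed[OF \<phi>] by blast
qed

lemma fusion_system_decomposable_homs: "fusion_system p G (Sv vs) decomposable_homs"
proof (rule FT.subsystemI)
  show "decomposable_homs P Q \<subseteq> FT P Q" for P Q unfolding decomposable_homs_def by blast
  show "\<phi> \<in> decomposable_homs P (\<phi> ` P)" if "\<phi> \<in> decomposable_homs P Q" for P Q \<phi>
    using that FT.onto_image unfolding decomposable_homs_def by blast
qed (fact conj_homs_decomposable decomposable_homs_comp_closed decomposable_homs_inverse_closed)+

text \<open>A generator at v is the identity chain down the walk from the root to v, followed by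
  the generator itself and the identity chain back up.\<close>

lemma generators_decomposable: "generators P Q \<subseteq> decomposable_homs P Q"
proof
  fix \<alpha> assume "\<alpha> \<in> generators P Q"
  then obtain v where v: "v \<in> V" and P: "is_sub G (Sv v) P" and Q: "Q = Sv v"
    and \<alpha>: "\<alpha> \<in> Fv v P Q"
    by (auto split: if_splits)
  interpret Fv: fusion_sys p G "Sv v" "Fv v" by (rule fusion_sys_vertex[OF v])
  obtain us where walk: "successively (\<lambda>u w. {u, w} \<in> Ed) (v # us)" and root: "last (v # us) = vs"
    and up: "\<forall>u\<in>set us. u \<in> V \<and> Sv v \<subseteq> Sv u"
    using ascending_walk_to_root[OF v] by blast
  have \<alpha>P: "is_sub G (Sv v) (\<alpha> ` P)" using Fv.image_is_sub[OF \<alpha>] .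
  define L where "L = identity_chain P (rev us) @ [(v, \<alpha>)] @ identity_chain (\<alpha> ` P) us"
  have up_sub: "u \<in> V \<and> is_sub G (Sv u) Z" if "u \<in> set us" "is_sub G (Sv v) Z" for u Z
    using that up unfolding is_sub_def by blast
  have "morphism_chain V Fv P (identity_chain P (rev us))"
    and "morphism_chain V Fv (\<alpha> ` P) (identity_chain (\<alpha> ` P) us)"
    using up_sub P \<alpha>P by (auto intro!: morphism_chain_identity_chain)
  then have "morphism_chain V Fv P L"
    unfolding L_def morphism_chain_append
    using Fv.onto_image[OF \<alpha>] v by (simp add: image_chain_map_identity_chain)
  moreover have "\<alpha> x = chain_map L x" if "x \<in> P" for x
    using that by (simp add: L_def chain_map_append chain_map_identity_chain)
  moreover have "lazy_closed_walk Ed vs (map fst L)"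
    using lazy_closed_walk_there_and_back[OF walk root] by (simp add: L_def map_fst_identity_chain)
  ultimately show "\<alpha> \<in> decomposable_homs P Q"
    unfolding decomposable_homs_def using vertex_hom_in_FT[OF v \<alpha>] by blast
qed

lemma FT_decomposable: "FT P Q \<subseteq> decomposable_homs P Q"
  using generated_fs_least[OF fusion_system_decomposable_homs generators_decomposable] .

lemma FT_decomposition:
  assumes "\<alpha> \<in> FT P R"
  shows "\<exists>n Ps vv as. Ps 0 = P \<and> Ps n = \<alpha> ` P
     \<and> (\<forall>i<n. vv i \<in> V \<and> is_sub G (Sv (vv i)) (Ps i) \<and> is_sub G (Sv (vv i)) (Ps (Suc i))
              \<and> as i \<in> Fv (vv i) (Ps i) (Ps (Suc i)))
     \<and> (\<forall>i. Suc i < n \<longrightarrow> {vv i, vv (Suc i)} \<in> Ed)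
     \<and> (\<forall>x\<in>P. \<alpha> x = chain_comp as n x)"
proof -
  have "\<alpha> \<in> decomposable_homs P R" using FT_decomposable assms by (rule subsetD)
  then obtain L where L: "morphism_chain V Fv P L" "lazy_closed_walk Ed vs (map fst L)"
    "\<forall>x\<in>P. \<alpha> x = chain_map L x"
    unfolding decomposable_homs_def by blast
  obtain L' where L': "morphism_chain V Fv P L'" "successively (\<lambda>u w. {u, w} \<in> Ed) (map fst L')"
    "\<forall>x\<in>P. chain_map L' x = chain_map L x"
    using merge_repeated_vertices[OF L(1), of "\<lambda>u w. {u, w} \<in> Ed"] L(2)
    unfolding lazy_closed_walk_def by blast
  obtain n Ps vv as where "Ps 0 = P" "Ps n = chain_map L' ` P"
    "\<forall>i<n. vv i \<in> V \<and> is_sub G (Sv (vv i)) (Ps i) \<and> is_sub G (Sv (vv i)) (Ps (Suc i))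
       \<and> as i \<in> Fv (vv i) (Ps i) (Ps (Suc i))"
    "\<forall>i. Suc i < n \<longrightarrow> {vv i, vv (Suc i)} \<in> Ed" "\<forall>x. chain_comp as n x = chain_map L' x"
    using morphism_chain_as_sequence[OF L'(1,2)] by blast
  moreover have "chain_map L' ` P = \<alpha> ` P" using L(3) L'(3) by (auto simp: image_iff)
  moreover have "\<forall>x\<in>P. \<alpha> x = chain_map L' x" using L(3) L'(3) by simp
  ultimately show ?thesis by metis
qed

lemma cocone_agrees_with_root:
  assumes compat: "\<forall>e\<in>Ed. \<forall>v\<in>e. \<forall>x\<in>Se e. \<psi>e e x = \<psi>v v x"
    and v: "v \<in> V"
  shows "\<forall>x\<in>Sv v. \<psi>v vs x = \<psi>v v x"
  using v
proof (induction rule: root_induct)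
  case root
  show ?case by simp
next
  case (step v w)
  have "Sv v \<subseteq> Sv w" using edge_subset_vertex[OF step(4)] step(5) by blast
  then show ?case using step compat by (metis insertI1 insertI2 subsetD)
qed

lemma FT_universal_morphism:
  assumes E: "fusion_system p H T E"
    and mv: "\<forall>v\<in>V. fs_morphism G (Sv v) (Fv v) H T E (\<psi>v v)"
    and compat: "\<forall>e\<in>Ed. \<forall>v\<in>e. \<forall>x\<in>Se e. \<psi>e e x = \<psi>v v x"
  shows "fs_morphism G (Sv vs) FT H T E (\<psi>v vs)"
proof (rule fs_morphism_generated_fs[OF fusion_system_FT E])
  show "fs_morphism G (Sv vs) (Fv vs) H T E (\<psi>v vs)" using mv root_in_V by blast
  show "fusion_system p G (Sv vs) (Fv vs)" by (rule fusion_system_vertex[OF root_in_V])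
  fix P Q \<alpha> assume "\<alpha> \<in> generators P Q"
  then obtain v where v: "v \<in> V" and P: "is_sub G (Sv v) P" and Q: "Q = Sv v"
    and \<alpha>: "\<alpha> \<in> Fv v P Q"
    by (auto split: if_splits)
  obtain \<beta> where \<beta>: "\<beta> \<in> E (\<psi>v v ` P) (\<psi>v v ` Q)" "\<forall>x\<in>P. \<psi>v v (\<alpha> x) = \<beta> (\<psi>v v x)"
    using mv v P Q \<alpha> is_sub_vertex[OF v] unfolding fs_morphism_def by blast
  have agree: "\<forall>x\<in>Sv v. \<psi>v vs x = \<psi>v v x" using cocone_agrees_with_root[OF compat v] .
  have "P \<subseteq> Sv v" "\<alpha> ` P \<subseteq> Sv v"
    using P Q fusion_sys.hom_image_subset[OF fusion_sys_vertex[OF v] \<alpha>] unfolding is_sub_def by auto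
  then have "\<psi>v v ` P = \<psi>v vs ` P" "\<psi>v v ` Q = \<psi>v vs ` Q"
    and "\<forall>x\<in>P. \<psi>v vs (\<alpha> x) = \<beta> (\<psi>v vs x)"
    using agree Q \<beta>(2) by (auto intro!: image_cong simp: subsetD)
  then show "\<exists>\<beta>\<in>E (\<psi>v vs ` P) (\<psi>v vs ` Q). \<forall>x\<in>P. \<psi>v vs (\<alpha> x) = \<beta> (\<psi>v vs x)"
    using \<beta>(1) by auto
qed

lemma FT_universal:
  assumes E: "fusion_system p H T E"
    and mv: "\<forall>v\<in>V. fs_morphism G (Sv v) (Fv v) H T E (\<psi>v v)"
    and compat: "\<forall>e\<in>Ed. \<forall>v\<in>e. \<forall>x\<in>Se e. \<psi>e e x = \<psi>v v x"
  shows "\<exists>\<psi>. fs_morphism G (Sv vs) FT H T E \<psi> \<and>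
    (\<forall>v\<in>V. \<forall>x\<in>Sv v. \<psi> x = \<psi>v v x) \<and> (\<forall>e\<in>Ed. \<forall>x\<in>Se e. \<psi> x = \<psi>e e x)"
proof (intro exI conjI ballI)
  show "fs_morphism G (Sv vs) FT H T E (\<psi>v vs)" using FT_universal_morphism[OF E mv compat] .
  show "\<psi>v vs x = \<psi>v v x" if "v \<in> V" "x \<in> Sv v" for v x
    using cocone_agrees_with_root[OF compat] that by blast
  fix e x assume e: "e \<in> Ed" and x: "x \<in> Se e"
  obtain v where v: "v \<in> V" "v \<in> e" using edge_has_vertex[OF e] by blast
  have "x \<in> Sv v" using edge_subset_vertex[OF e v(2)] x by blast
  then show "\<psi>v vs x = \<psi>e e x" using cocone_agrees_with_root[OF compat v(1)] compat e v(2) x by simp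
qed

end

theorem lemma2p3:
  fixes p :: nat and G :: "('a, 'm) monoid_scheme"
    and V :: "'v set" and Ed :: "'v set set" and vs :: 'v
    and Sv :: "'v \<Rightarrow> 'a set" and Se :: "'v set \<Rightarrow> 'a set"
    and Fv :: "'v \<Rightarrow> 'a set \<Rightarrow> 'a set \<Rightarrow> ('a \<Rightarrow> 'a) set"
    and Fe :: "'v set \<Rightarrow> 'a set \<Rightarrow> 'a set \<Rightarrow> ('a \<Rightarrow> 'a) set"
  assumes tree: "tree_fs_H p G V Ed vs Sv Se Fv Fe"
  defines "S \<equiv> Sv vs"
  defines "FT \<equiv> generated_fs p G S
             (\<lambda>P Q. \<Union>v\<in>V. if is_sub G (Sv v) P \<and> Q = Sv v then Fv v P Q else {})"
  shows
    \<comment> \<open>F_T with the inclusions is a cocone over F\<close>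
    "fusion_system p G S FT
     \<and> (\<forall>v\<in>V. fs_morphism G (Sv v) (Fv v) G S FT (\<lambda>x. x))
     \<and> (\<forall>e\<in>Ed. fs_morphism G (Se e) (Fe e) G S FT (\<lambda>x. x))
     \<comment> \<open>universal property, for every cocone into a fusion system E on T\<close>
     \<and> (\<forall>(H :: ('b, 'n) monoid_scheme) T E (\<psi>v :: 'v \<Rightarrow> 'a \<Rightarrow> 'b) (\<psi>e :: 'v set \<Rightarrow> 'a \<Rightarrow> 'b).
          fusion_system p H T E
          \<and> (\<forall>v\<in>V. fs_morphism G (Sv v) (Fv v) H T E (\<psi>v v))
          \<and> (\<forall>e\<in>Ed. fs_morphism G (Se e) (Fe e) H T E (\<psi>e e))
          \<and> (\<forall>e\<in>Ed. \<forall>v\<in>e. \<forall>x\<in>Se e. \<psi>e e x = \<psi>v v x)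
          \<longrightarrow>
          (\<exists>\<psi>. fs_morphism G S FT H T E \<psi>
               \<and> (\<forall>v\<in>V. \<forall>x\<in>Sv v. \<psi> x = \<psi>v v x)
               \<and> (\<forall>e\<in>Ed. \<forall>x\<in>Se e. \<psi> x = \<psi>e e x))
          \<and> (\<forall>\<psi> \<psi>'. fs_morphism G S FT H T E \<psi>
               \<and> (\<forall>v\<in>V. \<forall>x\<in>Sv v. \<psi> x = \<psi>v v x)
               \<and> (\<forall>e\<in>Ed. \<forall>x\<in>Se e. \<psi> x = \<psi>e e x)
               \<and> fs_morphism G S FT H T E \<psi>'
               \<and> (\<forall>v\<in>V. \<forall>x\<in>Sv v. \<psi>' x = \<psi>v v x)
               \<and> (\<forall>e\<in>Ed. \<forall>x\<in>Se e. \<psi>' x = \<psi>e e x)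
               \<longrightarrow> (\<forall>x\<in>S. \<psi> x = \<psi>' x)))
     \<comment> \<open>decomposition of morphisms of F_T along paths in the tree\<close>
     \<and> (\<forall>P \<alpha>. is_sub G S P \<and> \<alpha> \<in> FT P S \<longrightarrow>
          (\<exists>n Ps vv as.
             Ps 0 = P \<and> Ps n = \<alpha> ` P
             \<and> (\<forall>i<n. vv i \<in> V \<and> is_sub G (Sv (vv i)) (Ps i) \<and> is_sub G (Sv (vv i)) (Ps (Suc i))
                      \<and> as i \<in> Fv (vv i) (Ps i) (Ps (Suc i)))
             \<and> (\<forall>i. Suc i < n \<longrightarrow> {vv i, vv (Suc i)} \<in> Ed)
             \<and> (\<forall>x\<in>P. \<alpha> x = chain_comp as n x)))"
proof -
  interpret Tree: tree_of_fusion_systems p G V Ed vs Sv Se Fv Fe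
    by (rule tree_of_fusion_systems.intro, fact tree)
  show ?thesis
    unfolding S_def FT_def
  proof (intro conjI allI impI)
    fix P \<alpha> assume "is_sub G (Sv vs) P \<and> \<alpha> \<in> Tree.FT P (Sv vs)"
    then show "\<exists>n Ps vv as. Ps 0 = P \<and> Ps n = \<alpha> ` P
     \<and> (\<forall>i<n. vv i \<in> V \<and> is_sub G (Sv (vv i)) (Ps i) \<and> is_sub G (Sv (vv i)) (Ps (Suc i))
              \<and> as i \<in> Fv (vv i) (Ps i) (Ps (Suc i)))
     \<and> (\<forall>i. Suc i < n \<longrightarrow> {vv i, vv (Suc i)} \<in> Ed)
     \<and> (\<forall>x\<in>P. \<alpha> x = chain_comp as n x)"
      using Tree.FT_decomposition by blast
  next
    fix H :: "('b, 'n) monoid_scheme" and T E and \<psi>v :: "'v \<Rightarrow> 'a \<Rightarrow> 'b"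
      and \<psi>e :: "'v set \<Rightarrow> 'a \<Rightarrow> 'b"
    assume "fusion_system p H T E
      \<and> (\<forall>v\<in>V. fs_morphism G (Sv v) (Fv v) H T E (\<psi>v v))
      \<and> (\<forall>e\<in>Ed. fs_morphism G (Se e) (Fe e) H T E (\<psi>e e))
      \<and> (\<forall>e\<in>Ed. \<forall>v\<in>e. \<forall>x\<in>Se e. \<psi>e e x = \<psi>v v x)"
    then show "\<exists>\<psi>. fs_morphism G (Sv vs) Tree.FT H T E \<psi>
      \<and> (\<forall>v\<in>V. \<forall>x\<in>Sv v. \<psi> x = \<psi>v v x) \<and> (\<forall>e\<in>Ed. \<forall>x\<in>Se e. \<psi> x = \<psi>e e x)"
      by (elim conjE) (rule Tree.FT_universal)
  qed (use Tree.fusion_system_FT Tree.fs_morphism_vertex_FT Tree.fs_morphism_edge_FT Tree.root_in_V in simp_all)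
qed

end
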